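(* Let $p$ be a prime and $s>1$, and let $F(x,y)$ be the formal group law of mod $p$ Morava $K$-theory $K(s)$. Then $$F(x,y)\equiv x+y-v_s\sum_{0<j<p}\frac1p\binom{p}{j}\bigl(x^{p^{s-1}}\bigr)^{j}\bigl(y^{p^{s-1}}\bigr)^{p-j}$$ modulo $x^{p^{2(s-1)}}$ (and likewise modulo $y^{p^{2(s-1)}}$).
   Context: The coefficient ring of $K(s)$ is $\mathbb{F}_p[v_s,v_s^{-1}]$, $|v_s|=2(p^s-1)$, and its formal group law is the mod $p$ reduction of the $p$-typical formal group law over $\mathbb{Z}_{(p)}[v_s]$ obtained from the universal $p$-typical formal group law $F_{BP}$ over $BP_*=\mathbb{Z}_{(p)}[v_1,v_2,\dots]$ (Hazewinkel generators) by setting $v_i=0$ for all $i\ne s$; its logarithm is $\sum_{k\ge0}v_s^{(p^{ks}-1)/(p^s-1)}x^{p^{ks}}/p^k$. Note $\frac1p\binom pj\in\mathbb{Z}$ for $0<j<p$. *)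

theory Defs
  imports "HOL-Computational_Algebra.Computational_Algebra"
begin

text \<open>Bivariate power series over Q[v] are represented as rat poly fps fps:
  the outer variable is y, the inner variable is x, so the coefficient of
  x^a y^b in G is G $ b $ a.  The indeterminate v is [:0,1:].\<close>

definition bvX :: "rat poly fps fps" where
  "bvX = fps_const fps_X"

definition bvY :: "rat poly fps fps" where
  "bvY = fps_X"

definition bvconst :: "rat poly \<Rightarrow> rat poly fps fps" where
  "bvconst c = fps_const (fps_const c)"

text \<open>k-th coefficient of the K(s) logarithm over Z_(p)[v]:
  v^((p^(ks)-1)/(p^s-1)) / p^k, attached to x^(p^(ks)).\<close>
definition Ks_log_coeff :: "nat \<Rightarrow> nat \<Rightarrow> nat \<Rightarrow> rat poly" where
  "Ks_log_coeff p s k = monom (1 / of_nat p ^ k) ((p ^ (k * s) - 1) div (p ^ s - 1))"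

text \<open>The truncation k \<le> a+b is
  harmless: G^(p^(ks)) has no terms of total degree < p^(ks), and p^(ks) > k.\<close>
definition Ks_log2 :: "nat \<Rightarrow> nat \<Rightarrow> rat poly fps fps \<Rightarrow> rat poly fps fps" where
  "Ks_log2 p s G = Abs_fps (\<lambda>b. Abs_fps (\<lambda>a.
      \<Sum>k\<le>a+b. Ks_log_coeff p s k * ((G ^ (p ^ (k * s))) $ b $ a)))"

text \<open>F is the formal group law over Z_(p)[v] (inside Q[v]) with the K(s) logarithm:
  F(0,0) = 0 and log F(x,y) = log x + log y. Its mod p reduction is the FGL of K(s).\<close>
definition is_Ks_fgl :: "nat \<Rightarrow> nat \<Rightarrow> rat poly fps fps \<Rightarrow> bool" where
  "is_Ks_fgl p s F \<longleftrightarrow> F $ 0 $ 0 = 0 \<and> Ks_log2 p s F = Ks_log2 p s bvX + Ks_log2 p s bvY"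

definition in_Zp :: "nat \<Rightarrow> rat \<Rightarrow> bool" where
  "in_Zp p q \<longleftrightarrow> (\<exists>a b :: int. b \<noteq> 0 \<and> \<not> int p dvd b \<and> q = of_int a / of_int b)"

text \<open>q lies in p * Z_(p)[v], i.e. q reduces to 0 mod p.\<close>
definition p_divisible :: "nat \<Rightarrow> rat poly \<Rightarrow> bool" where
  "p_divisible p q \<longleftrightarrow> (\<forall>n. in_Zp p (coeff q n / of_nat p))"

definition Ks_rhs :: "nat \<Rightarrow> nat \<Rightarrow> rat poly fps fps" where
  "Ks_rhs p s = bvX + bvY - bvconst [:0, 1:] *
     (\<Sum>j\<in>{0<..<p}. bvconst [: of_nat (p choose j) / of_nat p :]
        * bvX ^ (p ^ (s - 1) * j) * bvY ^ (p ^ (s - 1) * (p - j)))"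

end

theory Submission
  imports Defs
begin

text \<open>Write \<open>q = p^(s-1)\<close>, \<open>M = q^2\<close> and \<open>G\<close> for the right hand side, and work
  modulo \<open>p^j\<close> and \<open>(x y)^M\<close>. Since \<open>G \<equiv> x + y\<close> modulo \<open>(x y)^q\<close>, every term of
  \<open>G^(p^s) - (x + y)^(p^s)\<close> surviving modulo \<open>(x y)^M\<close> carries a binomial coefficient
  divisible by \<open>p^2\<close>; as moreover \<open>(x + y)^q \<equiv> x^q + y^q\<close> mod \<open>p\<close>, the term
  \<open>v z^(p^s)/p\<close> of \<open>log G - log x - log y\<close> is \<open>v C_p(x^q, y^q)\<close> modulo \<open>p\<close>, which is
  exactly the correction in \<open>G\<close>. For \<open>k \<ge> 2\<close> the terms \<open>v^(...) z^(p^(ks))/p^k\<close> are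
  additive modulo \<open>p\<close>, because \<open>p^(k+1)\<close> divides every binomial coefficient of \<open>p^(ks)\<close>
  at an index below \<open>M\<close>. So \<open>log G \<equiv> log x + log y\<close>, and comparing with
  \<open>log F = log x + log y\<close> by induction on the total degree gives \<open>F \<equiv> G\<close>: the Frobenius
  congruence \<open>A \<equiv> B\<close> mod \<open>p^j\<close> \<open>\<Longrightarrow>\<close> \<open>A^(p^n) \<equiv> B^(p^n)\<close> mod \<open>p^(j+n)\<close> makes the
  logarithmic terms of \<open>F\<close> and \<open>G\<close> agree once their lower-degree parts do.\<close>

lemma bv_mult_nth: "(G * H) $ b $ a = (\<Sum>i\<le>b. \<Sum>k\<le>a. G $ i $ k * H $ (b - i) $ (a - k))"
  by (simp add: fps_mult_nth fps_sum_nth atLeast0AtMost)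

lemma bvconst_nth: "bvconst c $ b $ a = (if a = 0 \<and> b = 0 then c else 0)"
  by (simp add: bvconst_def)

lemma bvconst_mult_nth: "(bvconst c * H) $ b $ a = c * H $ b $ a"
  by (simp add: bvconst_def)

lemma bvconst_mult: "bvconst c * bvconst d = bvconst (c * d)"
  by (simp add: bvconst_def)

lemma of_nat_eq_bvconst: "(of_nat n :: rat poly fps fps) = bvconst (of_nat n)"
  by (simp add: bvconst_def fps_of_nat)

lemma bvX_pow_mult_bvY_pow_nth:
  "(bvX ^ i * bvY ^ j) $ b $ a = (if a = i \<and> b = j then 1 else 0)"
proof -
  have "bvX ^ i * bvY ^ j = fps_const (fps_X ^ i) * fps_X ^ j"
    by (simp add: bvX_def bvY_def fps_const_power)
  then show ?thesis by (simp add: fps_X_power_nth)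
qed

definition xy_pow_dvd :: "nat \<Rightarrow> rat poly fps fps \<Rightarrow> bool" where
  "xy_pow_dvd m G \<longleftrightarrow> (\<forall>a b. (a < m \<or> b < m) \<longrightarrow> G $ b $ a = 0)"

lemma xy_pow_dvd_mult:
  assumes "xy_pow_dvd m G" "xy_pow_dvd n H"
  shows "xy_pow_dvd (m + n) (G * H)"
  unfolding xy_pow_dvd_def
proof (intro allI impI)
  fix a b assume ab: "a < m + n \<or> b < m + n"
  have "G $ i $ k * H $ (b - i) $ (a - k) = 0" if "i \<le> b" "k \<le> a" for i k
  proof -
    from that ab have "(k < m \<or> i < m) \<or> (a - k < n \<or> b - i < n)" by auto
    then show ?thesis using assms unfolding xy_pow_dvd_def by auto
  qed
  then show "(G * H) $ b $ a = 0" unfolding bv_mult_nth by (intro sum.neutral ballI) auto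
qed

lemma xy_pow_dvd_0: "xy_pow_dvd 0 G"
  by (simp add: xy_pow_dvd_def)

lemma xy_pow_dvd_mult_right: "xy_pow_dvd m G \<Longrightarrow> xy_pow_dvd m (G * H)"
  using xy_pow_dvd_mult[of m G 0 H] xy_pow_dvd_0 by simp

lemma xy_pow_dvd_mult_left: "xy_pow_dvd m H \<Longrightarrow> xy_pow_dvd m (G * H)"
  using xy_pow_dvd_mult[of 0 G m H] xy_pow_dvd_0 by simp

lemma xy_pow_dvd_power: "xy_pow_dvd m G \<Longrightarrow> xy_pow_dvd (m * n) (G ^ n)"
  by (induction n) (auto simp: xy_pow_dvd_0 intro: xy_pow_dvd_mult[of m G "m * _", simplified add.commute])

lemma xy_pow_dvd_mono: "xy_pow_dvd m G \<Longrightarrow> n \<le> m \<Longrightarrow> xy_pow_dvd n G"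
  by (auto simp: xy_pow_dvd_def)

lemma xy_pow_dvd_uminus: "xy_pow_dvd m G \<Longrightarrow> xy_pow_dvd m (- G)"
  by (simp add: xy_pow_dvd_def)

lemma xy_pow_dvd_sum: "(\<And>i. i \<in> S \<Longrightarrow> xy_pow_dvd m (f i)) \<Longrightarrow> xy_pow_dvd m (sum f S)"
  by (simp add: xy_pow_dvd_def fps_sum_nth)

lemma xy_pow_dvd_monomial: "m \<le> i \<Longrightarrow> m \<le> j \<Longrightarrow> xy_pow_dvd m (bvX ^ i * bvY ^ j)"
  by (auto simp: xy_pow_dvd_def bvX_pow_mult_bvY_pow_nth)

definition total_order_ge :: "nat \<Rightarrow> rat poly fps fps \<Rightarrow> bool" where
  "total_order_ge d G \<longleftrightarrow> (\<forall>a b. a + b < d \<longrightarrow> G $ b $ a = 0)"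

lemma total_order_ge_mult:
  assumes "total_order_ge d G" "total_order_ge e H"
  shows "total_order_ge (d + e) (G * H)"
  unfolding total_order_ge_def
proof (intro allI impI)
  fix a b assume ab: "a + b < d + e"
  have "G $ i $ k * H $ (b - i) $ (a - k) = 0" if "i \<le> b" "k \<le> a" for i k
  proof -
    from that ab have "k + i < d \<or> (a - k) + (b - i) < e" by auto
    then show ?thesis using assms unfolding total_order_ge_def by auto
  qed
  then show "(G * H) $ b $ a = 0" unfolding bv_mult_nth by (intro sum.neutral ballI) auto
qed

lemma total_order_ge_power: "total_order_ge d G \<Longrightarrow> total_order_ge (d * n) (G ^ n)"
proof (induction n)
  case (Suc n)
  then show ?case using total_order_ge_mult[of d G "d * n"] by (simp add: add.commute)
qed (simp add: total_order_ge_def)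

lemma total_order_ge_mono: "total_order_ge d G \<Longrightarrow> e \<le> d \<Longrightarrow> total_order_ge e G"
  by (auto simp: total_order_ge_def)

lemma total_order_ge_sum: "(\<And>i. i \<in> S \<Longrightarrow> total_order_ge d (f i)) \<Longrightarrow> total_order_ge d (sum f S)"
  by (simp add: total_order_ge_def fps_sum_nth)

lemma total_order_ge_power_diff:
  assumes A: "total_order_ge 1 A" and B: "total_order_ge 1 B" and AB: "total_order_ge d (A - B)"
    and N: "N \<ge> 2"
  shows "total_order_ge (d + 1) (A ^ N - B ^ N)"
proof -
  have "A ^ N - B ^ N = (A - B) * (\<Sum>i<N. B ^ (N - Suc i) * A ^ i)"
    by (rule power_diff_sumr2)
  moreover have "total_order_ge 1 (\<Sum>i<N. B ^ (N - Suc i) * A ^ i)"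
  proof (rule total_order_ge_sum)
    fix i assume i: "i \<in> {..<N}"
    have "total_order_ge (1 * (N - Suc i) + 1 * i) (B ^ (N - Suc i) * A ^ i)"
      by (intro total_order_ge_mult total_order_ge_power A B)
    then show "total_order_ge 1 (B ^ (N - Suc i) * A ^ i)"
      by (rule total_order_ge_mono) (use i N in auto)
  qed
  ultimately show ?thesis using total_order_ge_mult[OF AB, of 1] by metis
qed

lemma prime_power_dvd_binomial_prime_power:
  fixes p e t i :: nat
  assumes p: "prime p" and i: "0 < i" "i < p ^ e" and t: "\<not> p ^ t dvd i"
  shows "p ^ (e + 1 - t) dvd (p ^ e choose i)"
proof (cases "p ^ e choose i = 0")
  case False
  obtain k n where "i = Suc k" "p ^ e = Suc n" using i by (metis gr0_implies_Suc less_trans)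
  then have "i * (p ^ e choose i) = p ^ e * (n choose k)" using Suc_times_binomial[of k n] by simp
  then have "p ^ e dvd i * (p ^ e choose i)" by simp
  then have "e \<le> multiplicity p (i * (p ^ e choose i))"
    using p i False by (intro multiplicity_geI) auto
  also have "\<dots> = multiplicity p i + multiplicity p (p ^ e choose i)"
    using p i False by (intro prime_elem_multiplicity_mult_distrib) auto
  finally have "e \<le> multiplicity p i + multiplicity p (p ^ e choose i)" .
  moreover have "multiplicity p i < t"
    using p i t by (intro multiplicity_lessI) auto
  ultimately show ?thesis by (intro multiplicity_dvd') simp
qed (use i in simp)

definition Ks_log_defect :: "nat \<Rightarrow> nat \<Rightarrow> nat \<Rightarrow> rat poly fps fps \<Rightarrow> rat poly fps fps" where
  "Ks_log_defect p s k K
    = bvconst (Ks_log_coeff p s k) * (K ^ p ^ (k * s) - bvX ^ p ^ (k * s) - bvY ^ p ^ (k * s))"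

lemma is_Ks_fgl_nth:
  assumes "is_Ks_fgl p s F"
  shows "(F - bvX - bvY) $ b $ a = - (\<Sum>k\<in>{1..a + b}. Ks_log_defect p s k F $ b $ a)"
proof -
  have "Ks_log2 p s F $ b $ a = (Ks_log2 p s bvX + Ks_log2 p s bvY) $ b $ a"
    using assms by (simp add: is_Ks_fgl_def)
  then have "(\<Sum>k\<le>a + b. Ks_log_defect p s k F $ b $ a) = 0"
    by (simp add: Ks_log2_def Ks_log_defect_def bvconst_mult_nth sum_subtractf right_diff_distrib)
  moreover have "{..a + b} = insert 0 {1..a + b}" by auto
  moreover have "Ks_log_defect p s 0 F = F - bvX - bvY"
    by (simp add: Ks_log_defect_def Ks_log_coeff_def bvconst_def)
  ultimately show ?thesis by (simp add: eq_neg_iff_add_eq_0)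
qed

context
  fixes p :: nat
  assumes p_prime: "prime p"
begin

lemma in_Zp_of_int: "in_Zp p (of_int n)"
  unfolding in_Zp_def using p_prime by (intro exI[of _ n] exI[of _ 1]) (auto simp: prime_gt_1_nat)

lemma in_Zp_0: "in_Zp p 0"
  using in_Zp_of_int[of 0] by simp

lemma in_Zp_uminus: "in_Zp p x \<Longrightarrow> in_Zp p (- x)"
  unfolding in_Zp_def by (metis minus_divide_left of_int_minus)

lemma in_Zp_add_mult:
  assumes "in_Zp p x" "in_Zp p y"
  shows "in_Zp p (x + y) \<and> in_Zp p (x * y)"
proof -
  obtain a b where ab: "b \<noteq> 0" "\<not> int p dvd b" "x = of_int a / of_int b"
    using assms(1) unfolding in_Zp_def by blast
  obtain c d where cd: "d \<noteq> 0" "\<not> int p dvd d" "y = of_int c / of_int d"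
    using assms(2) unfolding in_Zp_def by blast
  have "\<not> int p dvd b * d" using ab cd p_prime by (simp add: prime_dvd_mult_iff)
  moreover have "x + y = of_int (a * d + c * b) / of_int (b * d)" "x * y = of_int (a * c) / of_int (b * d)"
    using ab cd by (simp_all add: field_simps)
  ultimately show ?thesis
    unfolding in_Zp_def using ab cd
    by (intro conjI exI[of _ "b * d"] exI[of _ "a * d + c * b"] exI[of _ "a * c"]) auto
qed

lemma in_Zp_add: "in_Zp p x \<Longrightarrow> in_Zp p y \<Longrightarrow> in_Zp p (x + y)"
  using in_Zp_add_mult by blast

lemma in_Zp_mult: "in_Zp p x \<Longrightarrow> in_Zp p y \<Longrightarrow> in_Zp p (x * y)"
  using in_Zp_add_mult by blast

lemma in_Zp_sum: "(\<And>i. i \<in> S \<Longrightarrow> in_Zp p (f i)) \<Longrightarrow> in_Zp p (sum f S)"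
  by (induction S rule: infinite_finite_induct) (auto simp: in_Zp_0 in_Zp_add)

definition p_pow_dvd :: "nat \<Rightarrow> rat poly \<Rightarrow> bool" where
  "p_pow_dvd j c \<longleftrightarrow> (\<forall>n. in_Zp p (coeff c n / of_nat p ^ j))"

lemma p_pow_dvd_0: "p_pow_dvd j 0"
  by (simp add: p_pow_dvd_def in_Zp_0)

lemma p_pow_dvd_add: "p_pow_dvd j c \<Longrightarrow> p_pow_dvd j d \<Longrightarrow> p_pow_dvd j (c + d)"
  unfolding p_pow_dvd_def by (simp add: add_divide_distrib in_Zp_add)

lemma p_pow_dvd_uminus: "p_pow_dvd j c \<Longrightarrow> p_pow_dvd j (- c)"
  unfolding p_pow_dvd_def using in_Zp_uminus by (metis coeff_minus minus_divide_left)

lemma p_pow_dvd_diff: "p_pow_dvd j c \<Longrightarrow> p_pow_dvd j d \<Longrightarrow> p_pow_dvd j (c - d)"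
  using p_pow_dvd_add[of j c "- d"] p_pow_dvd_uminus by simp

lemma p_pow_dvd_sum: "(\<And>i. i \<in> S \<Longrightarrow> p_pow_dvd j (f i)) \<Longrightarrow> p_pow_dvd j (sum f S)"
  by (induction S rule: infinite_finite_induct) (auto simp: p_pow_dvd_0 p_pow_dvd_add)

lemma p_pow_dvd_mult:
  assumes "p_pow_dvd i c" "p_pow_dvd j d"
  shows "p_pow_dvd (i + j) (c * d)"
  unfolding p_pow_dvd_def
proof
  fix n
  have "coeff (c * d) n / of_nat p ^ (i + j)
      = (\<Sum>k\<le>n. (coeff c k / of_nat p ^ i) * (coeff d (n - k) / of_nat p ^ j))"
    by (simp add: coeff_mult sum_divide_distrib power_add)
  also have "in_Zp p \<dots>"
    using assms by (intro in_Zp_sum in_Zp_mult) (auto simp: p_pow_dvd_def)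
  finally show "in_Zp p (coeff (c * d) n / of_nat p ^ (i + j))" .
qed

lemma p_pow_dvd_smult_of_nat:
  assumes "p ^ m dvd n" "p_pow_dvd j c"
  shows "p_pow_dvd (j + m) (smult (of_nat n) c)"
  unfolding p_pow_dvd_def
proof
  fix l
  obtain r where r: "n = p ^ m * r" using assms(1) by blast
  have "p > 0" using p_prime by (simp add: prime_gt_0_nat)
  then have "coeff (smult (of_nat n) c) l / of_nat p ^ (j + m) = of_int (int r) * (coeff c l / of_nat p ^ j)"
    by (simp add: r power_add field_simps)
  also have "in_Zp p \<dots>"
    using assms(2) by (intro in_Zp_mult in_Zp_of_int) (auto simp: p_pow_dvd_def)
  finally show "in_Zp p (coeff (smult (of_nat n) c) l / of_nat p ^ (j + m))" .
qed

lemma p_pow_dvd_mono: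
  assumes "p_pow_dvd j c" "i \<le> j"
  shows "p_pow_dvd i c"
  unfolding p_pow_dvd_def
proof
  fix n
  have "p \<noteq> 0" using p_prime by auto
  then have "coeff c n / of_nat p ^ i = (coeff c n / of_nat p ^ j) * of_int (int p ^ (j - i))"
    using assms(2) by (simp add: field_simps flip: power_add)
  also have "in_Zp p \<dots>"
    using assms(1) by (intro in_Zp_mult in_Zp_of_int) (auto simp: p_pow_dvd_def)
  finally show "in_Zp p (coeff c n / of_nat p ^ i)" .
qed

text \<open>\<open>in_ideal j M G\<close> says \<open>G \<in> p^j Z_(p)[v][[x,y]] + (x y)^M Q[v][[x,y]]\<close>.\<close>
definition in_ideal :: "nat \<Rightarrow> nat \<Rightarrow> rat poly fps fps \<Rightarrow> bool" where
  "in_ideal j M G \<longleftrightarrow> (\<forall>a b. (a < M \<or> b < M) \<longrightarrow> p_pow_dvd j (G $ b $ a))"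

lemma in_ideal_add: "in_ideal j M G \<Longrightarrow> in_ideal j M H \<Longrightarrow> in_ideal j M (G + H)"
  by (simp add: in_ideal_def p_pow_dvd_add)

lemma in_ideal_uminus: "in_ideal j M G \<Longrightarrow> in_ideal j M (- G)"
  by (simp add: in_ideal_def p_pow_dvd_uminus)

lemma in_ideal_diff: "in_ideal j M G \<Longrightarrow> in_ideal j M H \<Longrightarrow> in_ideal j M (G - H)"
  by (simp add: in_ideal_def p_pow_dvd_diff)

lemma in_ideal_sum: "(\<And>i. i \<in> S \<Longrightarrow> in_ideal j M (f i)) \<Longrightarrow> in_ideal j M (sum f S)"
  by (simp add: in_ideal_def fps_sum_nth p_pow_dvd_sum)

lemma in_ideal_mono: "in_ideal j M G \<Longrightarrow> i \<le> j \<Longrightarrow> in_ideal i M G"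
  unfolding in_ideal_def using p_pow_dvd_mono by blast

lemma in_ideal_mult:
  assumes "in_ideal i M G" "in_ideal j M H"
  shows "in_ideal (i + j) M (G * H)"
  unfolding in_ideal_def
proof (intro allI impI)
  fix a b assume "a < M \<or> b < M"
  then show "p_pow_dvd (i + j) ((G * H) $ b $ a)"
    unfolding bv_mult_nth using assms
    by (intro p_pow_dvd_sum p_pow_dvd_mult) (auto simp: in_ideal_def)
qed

lemma p_pow_dvd_const_int: "p_pow_dvd 0 [:of_int n:]"
  by (auto simp: p_pow_dvd_def coeff_pCons in_Zp_of_int in_Zp_0 split: nat.splits)

lemma in_ideal_bvconst: "p_pow_dvd 0 c \<Longrightarrow> in_ideal 0 M (bvconst c)"
  by (auto simp: in_ideal_def bvconst_nth p_pow_dvd_0)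

lemma p_pow_dvd_1: "p_pow_dvd 0 1"
  using p_pow_dvd_const_int[of 1] by (simp add: one_pCons)

lemma in_ideal_1: "in_ideal 0 M 1"
  using in_ideal_bvconst[OF p_pow_dvd_1, of M] by (simp add: bvconst_def)

lemma in_ideal_power: "in_ideal j M G \<Longrightarrow> in_ideal (j * n) M (G ^ n)"
proof (induction n)
  case (Suc n)
  then show ?case using in_ideal_mult[of j M G "j * n"] by (simp add: add.commute)
qed (simp add: in_ideal_1)

lemma in_ideal_power_0: "in_ideal 0 M G \<Longrightarrow> in_ideal 0 M (G ^ n)"
  using in_ideal_power[of 0 M G n] by simp

lemma in_ideal_of_nat_mult:
  assumes "p ^ m dvd n" "in_ideal j M G"
  shows "in_ideal (j + m) M (of_nat n * G)"
proof -
  have "(of_nat n * G) $ b $ a = smult (of_nat n) (G $ b $ a)" for a b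
    by (simp add: of_nat_eq_bvconst bvconst_mult_nth of_nat_poly)
  then show ?thesis using assms p_pow_dvd_smult_of_nat by (simp add: in_ideal_def)
qed

lemma in_ideal_if_xy_pow_dvd: "xy_pow_dvd M G \<Longrightarrow> in_ideal j M G"
  by (simp add: xy_pow_dvd_def in_ideal_def p_pow_dvd_0)

lemma in_ideal_monomial: "in_ideal 0 M (bvX ^ i * bvY ^ k)"
  by (auto simp: in_ideal_def bvX_pow_mult_bvY_pow_nth p_pow_dvd_0 p_pow_dvd_1)

lemma in_ideal_bvX: "in_ideal 0 M bvX"
  using in_ideal_monomial[of M 1 0] by simp

lemma in_ideal_bvY: "in_ideal 0 M bvY"
  using in_ideal_monomial[of M 0 1] by simp

lemma in_ideal_log_coeff_mult:
  assumes "in_ideal (j + k) M H"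
  shows "in_ideal j M (bvconst (Ks_log_coeff p s k) * H)"
  unfolding in_ideal_def bvconst_mult_nth Ks_log_coeff_def
proof (intro allI impI)
  fix a b assume "a < M \<or> b < M"
  then have H: "p_pow_dvd (j + k) (H $ b $ a)" using assms unfolding in_ideal_def by blast
  have "p \<noteq> 0" using p_prime by auto
  have "coeff (monom (1 / of_nat p ^ k) e * h) n = (if e \<le> n then coeff h (n - e) / of_nat p ^ k else 0)"
    for e n and h :: "rat poly"
    by (simp add: coeff_monom_mult)
  then show "p_pow_dvd j (monom (1 / of_nat p ^ k) ((p ^ (k * s) - 1) div (p ^ s - 1)) * H $ b $ a)"
    using H \<open>p \<noteq> 0\<close> by (auto simp: p_pow_dvd_def in_Zp_0 power_add field_simps)
qed

lemma in_ideal_power_prime_diff: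
  assumes G: "in_ideal 0 M G" and H: "in_ideal 0 M H" and j: "1 \<le> j" and GH: "in_ideal j M (G - H)"
  shows "in_ideal (j + 1) M (G ^ p - H ^ p)"
proof -
  define D where "D = G - H"
  have "G ^ p = (D + H) ^ p" by (simp add: D_def)
  also have "\<dots> = (\<Sum>k\<le>p. of_nat (p choose k) * D ^ k * H ^ (p - k))" by (rule binomial_ring)
  also have "{..p} = insert 0 {1..p}" by auto
  finally have "G ^ p - H ^ p = (\<Sum>k\<in>{1..p}. of_nat (p choose k) * (D ^ k * H ^ (p - k)))"
    by (simp add: mult.assoc)
  also have "in_ideal (j + 1) M \<dots>"
  proof (rule in_ideal_sum)
    fix k assume k: "k \<in> {1..p}"
    define m where "m = (if k < p then 1 else (0::nat))"
    have "p ^ m dvd (p choose k)"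
      using k p_prime by (auto simp: m_def intro: dvd_choose_prime)
    moreover have "in_ideal (j * k + 0) M (D ^ k * H ^ (p - k))"
      using in_ideal_mult[OF in_ideal_power[OF GH[folded D_def]] in_ideal_power_0[OF H]] by simp
    ultimately have "in_ideal (j * k + 0 + m) M (of_nat (p choose k) * (D ^ k * H ^ (p - k)))"
      by (rule in_ideal_of_nat_mult)
    moreover have "j + 1 \<le> j * k + m"
    proof (cases "k < p")
      case False
      then have "k \<ge> 2" using k prime_ge_2_nat[OF p_prime] by auto
      then show ?thesis using j mult_le_mono2[of 2 k j] by linarith
    qed (use k j in \<open>auto simp: m_def\<close>)
    ultimately show "in_ideal (j + 1) M (of_nat (p choose k) * (D ^ k * H ^ (p - k)))"
      by (auto intro: in_ideal_mono)
  qed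
  finally show ?thesis .
qed

lemma in_ideal_power_prime_power_diff:
  assumes G: "in_ideal 0 M G" and H: "in_ideal 0 M H" and j: "1 \<le> j" and GH: "in_ideal j M (G - H)"
  shows "in_ideal (j + n) M (G ^ p ^ n - H ^ p ^ n)"
proof (induction n)
  case (Suc n)
  have "in_ideal (j + n + 1) M ((G ^ p ^ n) ^ p - (H ^ p ^ n) ^ p)"
    using in_ideal_power_prime_diff[OF in_ideal_power_0[OF G] in_ideal_power_0[OF H] _ Suc] j by simp
  then show ?case by (simp add: power_mult[symmetric] mult.commute)
qed (use GH in simp)

lemma in_ideal_binomial_diff:
  assumes N: "N \<ge> 1"
    and binomial: "\<And>i. 0 < i \<Longrightarrow> i < N \<Longrightarrow> p ^ j dvd (N choose i) \<or> (M \<le> i \<and> M \<le> N - i)"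
  shows "in_ideal j M ((bvX + bvY) ^ N - bvX ^ N - bvY ^ N)"
proof -
  have "(bvX + bvY) ^ N = (\<Sum>i\<le>N. of_nat (N choose i) * bvX ^ i * bvY ^ (N - i))"
    by (rule binomial_ring)
  also have "{..N} = insert 0 (insert N {1..<N})" using N by auto
  finally have "(bvX + bvY) ^ N - bvX ^ N - bvY ^ N
      = (\<Sum>i\<in>{1..<N}. of_nat (N choose i) * (bvX ^ i * bvY ^ (N - i)))"
    using N by (simp add: mult.assoc)
  also have "in_ideal j M \<dots>"
  proof (rule in_ideal_sum)
    fix i assume i: "i \<in> {1..<N}"
    show "in_ideal j M (of_nat (N choose i) * (bvX ^ i * bvY ^ (N - i)))"
    proof (cases "p ^ j dvd (N choose i)")
      case True
      then show ?thesis using in_ideal_of_nat_mult[OF True in_ideal_monomial] by simp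
    next
      case False
      then have "M \<le> i" "M \<le> N - i" using binomial[of i] i by auto
      then show ?thesis
        by (intro in_ideal_if_xy_pow_dvd xy_pow_dvd_mult_left xy_pow_dvd_monomial)
    qed
  qed
  finally show ?thesis .
qed

text \<open>\<open>Cp s = C_p(x^q, y^q)\<close> with \<open>q = p^(s-1)\<close> and \<open>C_p(x, y) = ((x + y)^p - x^p - y^p)/p\<close>.\<close>
definition Cp :: "nat \<Rightarrow> rat poly fps fps" where
  "Cp s = (\<Sum>j\<in>{0<..<p}. bvconst [: of_nat (p choose j) / of_nat p :]
        * bvX ^ (p ^ (s - 1) * j) * bvY ^ (p ^ (s - 1) * (p - j)))"

definition bvV :: "rat poly fps fps" where
  "bvV = bvconst [:0, 1:]"

lemma Ks_rhs_eq: "Ks_rhs p s = bvX + bvY - bvV * Cp s"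
  by (simp add: Ks_rhs_def Cp_def bvV_def)

lemma p_pow_dvd_binomial_div_p:
  assumes "0 < j" "j < p"
  shows "p_pow_dvd 0 [: of_nat (p choose j) / of_nat p :]"
proof -
  have "p dvd (p choose j)" using assms p_prime by (intro dvd_choose_prime) auto
  then obtain d where d: "p choose j = p * d" by blast
  have "p \<noteq> 0" using p_prime by auto
  then have "[: of_nat (p choose j) / of_nat p :] = ([: of_int (int d) :] :: rat poly)"
    by (simp add: d)
  then show ?thesis using p_pow_dvd_const_int[of "int d"] by simp
qed

lemma in_ideal_Cp: "in_ideal 0 M (Cp s)"
  unfolding Cp_def mult.assoc
  using in_ideal_mult[OF in_ideal_bvconst[OF p_pow_dvd_binomial_div_p] in_ideal_monomial]
  by (intro in_ideal_sum) auto

lemma xy_pow_dvd_Cp: "xy_pow_dvd (p ^ (s - 1)) (Cp s)"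
  unfolding Cp_def mult.assoc
  by (intro xy_pow_dvd_sum xy_pow_dvd_mult_left xy_pow_dvd_monomial) auto

lemma in_ideal_bvV: "in_ideal 0 M bvV"
  unfolding bvV_def
  by (rule in_ideal_bvconst) (auto simp: p_pow_dvd_def in_Zp_0 coeff_pCons split: nat.splits
      intro: in_Zp_of_int[of 1, simplified])

lemma in_ideal_Ks_rhs: "in_ideal 0 M (Ks_rhs p s)"
  unfolding Ks_rhs_eq
  using in_ideal_mult[OF in_ideal_bvV in_ideal_Cp]
  by (intro in_ideal_diff in_ideal_add in_ideal_bvX in_ideal_bvY) simp

lemma Ks_rhs_nth_0_0: "Ks_rhs p s $ 0 $ 0 = 0"
proof -
  have "xy_pow_dvd (p ^ (s - 1)) (bvV * Cp s)" by (rule xy_pow_dvd_mult_left[OF xy_pow_dvd_Cp])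
  moreover have "0 < p ^ (s - 1)" using p_prime by (simp add: prime_gt_0_nat)
  ultimately have "(bvV * Cp s) $ 0 $ 0 = 0" unfolding xy_pow_dvd_def by blast
  then show ?thesis by (simp add: Ks_rhs_eq bvX_def bvY_def)
qed

lemma Ks_log_coeff_1_mult_of_nat:
  assumes "s > 0"
  shows "Ks_log_coeff p s 1 * of_nat n = [:0, 1:] * [: of_nat n / of_nat p :]"
proof -
  have "p ^ s > 1" using prime_gt_1_nat[OF p_prime] assms by (intro one_less_power) auto
  then have "Ks_log_coeff p s 1 = monom (1 / of_nat p) 1" by (simp add: Ks_log_coeff_def)
  then show ?thesis
    by (simp add: of_nat_poly poly_eq_iff coeff_monom_mult coeff_pCons split: nat.split)
qed

lemma Ks_log_coeff_1_mult_binomial_diff: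
  assumes "s > 0"
  shows "bvconst (Ks_log_coeff p s 1) * ((bvX ^ p ^ (s - 1) + bvY ^ p ^ (s - 1)) ^ p
      - (bvX ^ p ^ (s - 1)) ^ p - (bvY ^ p ^ (s - 1)) ^ p) = bvV * Cp s"
proof -
  define A where "A = bvX ^ p ^ (s - 1)"
  define B where "B = bvY ^ p ^ (s - 1)"
  have p1: "p \<ge> 1" using prime_gt_1_nat[OF p_prime] by simp
  have "(A + B) ^ p = (\<Sum>j\<le>p. of_nat (p choose j) * A ^ j * B ^ (p - j))" by (rule binomial_ring)
  also have "{..p} = insert 0 (insert p {0<..<p})" using p1 by auto
  finally have binomial: "(A + B) ^ p - A ^ p - B ^ p
      = (\<Sum>j\<in>{0<..<p}. of_nat (p choose j) * A ^ j * B ^ (p - j))"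
    using p1 by simp
  have "bvconst (Ks_log_coeff p s 1) * ((A + B) ^ p - A ^ p - B ^ p)
      = (\<Sum>j\<in>{0<..<p}. bvconst (Ks_log_coeff p s 1) * of_nat (p choose j) * (A ^ j * B ^ (p - j)))"
    unfolding binomial by (simp add: sum_distrib_left mult.assoc)
  also have "\<dots> = (\<Sum>j\<in>{0<..<p}. bvV * (bvconst [: of_nat (p choose j) / of_nat p :]
        * bvX ^ (p ^ (s - 1) * j) * bvY ^ (p ^ (s - 1) * (p - j))))"
  proof (rule sum.cong[OF refl])
    fix j
    have "bvconst (Ks_log_coeff p s 1) * of_nat (p choose j) = bvV * bvconst [: of_nat (p choose j) / of_nat p :]"
      by (simp only: of_nat_eq_bvconst bvconst_mult bvV_def Ks_log_coeff_1_mult_of_nat[OF assms])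
    then show "bvconst (Ks_log_coeff p s 1) * of_nat (p choose j) * (A ^ j * B ^ (p - j)) =
      bvV * (bvconst [: of_nat (p choose j) / of_nat p :] * bvX ^ (p ^ (s - 1) * j) * bvY ^ (p ^ (s - 1) * (p - j)))"
      by (simp add: A_def B_def power_mult mult.assoc)
  qed
  also have "\<dots> = bvV * Cp s" by (simp add: Cp_def sum_distrib_left)
  finally show ?thesis unfolding A_def B_def .
qed

context
  fixes s :: nat
  assumes s_gt_1: "s > 1"
begin

lemma in_ideal_Ks_rhs_power_diff:
  "in_ideal 2 (p ^ (2 * (s - 1))) (Ks_rhs p s ^ p ^ s - (bvX + bvY) ^ p ^ s)"
proof -
  define M where "M = p ^ (2 * (s - 1))"
  define q where "q = p ^ (s - 1)"
  define W where "W = - (bvV * Cp s)"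
  define N where "N = p ^ s"
  have "q > 0" using p_prime by (simp add: q_def prime_gt_0_nat)
  have W: "xy_pow_dvd q W" "in_ideal 0 M W"
    using xy_pow_dvd_Cp in_ideal_mult[OF in_ideal_bvV in_ideal_Cp]
    by (auto simp: W_def q_def intro: xy_pow_dvd_uminus xy_pow_dvd_mult_left in_ideal_uminus)
  have XY: "in_ideal 0 M (bvX + bvY)" by (intro in_ideal_add in_ideal_bvX in_ideal_bvY)
  have "Ks_rhs p s ^ N = (\<Sum>i\<le>N. of_nat (N choose i) * W ^ i * (bvX + bvY) ^ (N - i))"
    unfolding binomial_ring[symmetric] by (simp add: Ks_rhs_eq W_def)
  also have "{..N} = insert 0 {1..N}" by auto
  finally have "Ks_rhs p s ^ N - (bvX + bvY) ^ N
      = (\<Sum>i\<in>{1..N}. of_nat (N choose i) * (W ^ i * (bvX + bvY) ^ (N - i)))"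
    by (simp add: mult.assoc)
  also have "in_ideal 2 M \<dots>"
  proof (rule in_ideal_sum)
    fix i assume i: "i \<in> {1..N}"
    show "in_ideal 2 M (of_nat (N choose i) * (W ^ i * (bvX + bvY) ^ (N - i)))"
    proof (cases "q dvd i")
      case True
      then have "q * q \<le> q * i" using i by (auto intro: dvd_imp_le)
      then have "xy_pow_dvd M (W ^ i)"
        using xy_pow_dvd_power[OF W(1), of i] by (auto simp: M_def q_def mult_2 power_add
            intro: xy_pow_dvd_mono)
      then show ?thesis
        by (intro in_ideal_if_xy_pow_dvd xy_pow_dvd_mult_left xy_pow_dvd_mult_right)
    next
      case False
      have "q dvd N" using s_gt_1 by (simp add: q_def N_def le_imp_power_dvd)
      then have "i < N" using False i by (cases "i = N") auto
      then have "p ^ (s + 1 - (s - 1)) dvd (N choose i)"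
        using i False unfolding N_def q_def by (intro prime_power_dvd_binomial_prime_power p_prime) auto
      moreover have "s + 1 - (s - 1) = 2" using s_gt_1 by simp
      ultimately have "p ^ 2 dvd (N choose i)" by simp
      from in_ideal_of_nat_mult[OF this in_ideal_mult[OF in_ideal_power_0[OF W(2)] in_ideal_power_0[OF XY]]]
      show ?thesis by (simp add: numeral_2_eq_2)
    qed
  qed
  finally show ?thesis by (simp add: M_def N_def)
qed

lemma in_ideal_Ks_log_defect_Ks_rhs_1:
  "in_ideal 1 (p ^ (2 * (s - 1))) (Ks_log_defect p s 1 (Ks_rhs p s) - bvV * Cp s)"
proof -
  define M where "M = p ^ (2 * (s - 1))"
  define q where "q = p ^ (s - 1)"
  define A where "A = bvX ^ q"
  define B where "B = bvY ^ q"
  have N: "p ^ s = q * p" unfolding q_def using s_gt_1 by (simp flip: power_Suc2)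
  have "q \<ge> 1" unfolding q_def using p_prime by (simp add: Suc_le_eq prime_gt_0_nat)
  then have "in_ideal 1 M ((bvX + bvY) ^ q - bvX ^ q - bvY ^ q)"
  proof (rule in_ideal_binomial_diff)
    fix i assume "0 < i" "i < q"
    then have "p ^ (s - 1 + 1 - (s - 1)) dvd (q choose i)"
      unfolding q_def by (intro prime_power_dvd_binomial_prime_power p_prime) (auto dest: dvd_imp_le)
    then show "p ^ 1 dvd (q choose i) \<or> (M \<le> i \<and> M \<le> q - i)" by simp
  qed
  then have "in_ideal 2 M (((bvX + bvY) ^ q) ^ p - (A + B) ^ p)"
    unfolding A_def B_def one_add_one[symmetric]
    by (intro in_ideal_power_prime_diff in_ideal_power_0 in_ideal_add in_ideal_bvX in_ideal_bvY)
      (simp_all add: diff_diff_eq)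
  then have "in_ideal 2 M ((Ks_rhs p s ^ p ^ s - (bvX + bvY) ^ p ^ s) + (((bvX + bvY) ^ q) ^ p - (A + B) ^ p))"
    by (rule in_ideal_add[OF in_ideal_Ks_rhs_power_diff[folded M_def]])
  then have "in_ideal 1 M (bvconst (Ks_log_coeff p s 1)
      * ((Ks_rhs p s ^ p ^ s - (bvX + bvY) ^ p ^ s) + (((bvX + bvY) ^ q) ^ p - (A + B) ^ p)))"
    by (rule in_ideal_log_coeff_mult[where j = 1 and k = 1, unfolded one_add_one])
  moreover have "bvV * Cp s = bvconst (Ks_log_coeff p s 1) * ((A + B) ^ p - A ^ p - B ^ p)"
    using Ks_log_coeff_1_mult_binomial_diff s_gt_1 by (simp add: A_def B_def q_def)
  moreover have "(bvX + bvY) ^ p ^ s = ((bvX + bvY) ^ q) ^ p" "bvX ^ p ^ s = A ^ p" "bvY ^ p ^ s = B ^ p"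
    by (simp_all add: N A_def B_def power_mult)
  ultimately show ?thesis by (simp add: Ks_log_defect_def M_def algebra_simps)
qed

text \<open>The factor \<open>p^(k+1)\<close> needed to absorb \<open>1/p^k\<close> is available both in the binomial
  coefficients of \<open>p^(ks)\<close> below \<open>M\<close> and in \<open>G^(p^(ks)) - (x + y)^(p^(ks))\<close>, which is
  divisible by \<open>p^(2+(k-1)s)\<close>.\<close>
lemma in_ideal_Ks_log_defect_Ks_rhs_ge_2:
  assumes k: "k \<ge> 2"
  shows "in_ideal 1 (p ^ (2 * (s - 1))) (Ks_log_defect p s k (Ks_rhs p s))"
proof -
  define M where "M = p ^ (2 * (s - 1))"
  define N where "N = p ^ (k * s)"
  define n where "n = (k - 1) * s"
  obtain a b where "k = a + 2" "s = b + 2"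
    using k s_gt_1 by (metis add.commute le_Suc_ex less_eq_Suc_le Suc_1)
  then have "k + 1 \<le> 2 + n" "k + 1 \<le> k * s + 1 - 2 * (s - 1)"
    by (simp_all add: n_def algebra_simps)
  have "in_ideal (2 + n) M ((Ks_rhs p s ^ p ^ s) ^ p ^ n - ((bvX + bvY) ^ p ^ s) ^ p ^ n)"
    using in_ideal_Ks_rhs_power_diff unfolding M_def
    by (intro in_ideal_power_prime_power_diff in_ideal_power_0 in_ideal_Ks_rhs in_ideal_add
        in_ideal_bvX in_ideal_bvY) auto
  moreover have "p ^ s * p ^ n = N"
    using k by (simp add: N_def n_def flip: power_add) (simp add: algebra_simps le_Suc_ex)
  ultimately have "in_ideal (k + 1) M (Ks_rhs p s ^ N - (bvX + bvY) ^ N)"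
    using \<open>k + 1 \<le> 2 + n\<close> by (auto simp flip: power_mult intro: in_ideal_mono)
  moreover have "in_ideal (k + 1) M ((bvX + bvY) ^ N - bvX ^ N - bvY ^ N)"
  proof (rule in_ideal_binomial_diff)
    show "N \<ge> 1" using p_prime by (simp add: N_def Suc_le_eq prime_gt_0_nat)
    have binomial: "p ^ (k + 1) dvd (N choose i)" if "0 < i" "i < N" "i < M" for i
    proof -
      have "p ^ (k * s + 1 - 2 * (s - 1)) dvd (N choose i)"
        using that unfolding N_def M_def
        by (intro prime_power_dvd_binomial_prime_power p_prime) (auto dest: dvd_imp_le)
      then show ?thesis
        using \<open>k + 1 \<le> k * s + 1 - 2 * (s - 1)\<close> by (meson dvd_trans le_imp_power_dvd)
    qed
    fix i assume "0 < i" "i < N"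
    then show "p ^ (k + 1) dvd (N choose i) \<or> (M \<le> i \<and> M \<le> N - i)"
      using binomial[of i] binomial[of "N - i"] binomial_symmetric[of i N] by (cases "i < M") auto
  qed
  ultimately have "in_ideal (1 + k) M (Ks_rhs p s ^ N - bvX ^ N - bvY ^ N)"
    using in_ideal_add by (fastforce simp: algebra_simps)
  then show ?thesis by (simp add: Ks_log_defect_def in_ideal_log_coeff_mult M_def N_def)
qed

lemma in_ideal_Ks_log_defect:
  assumes H: "in_ideal 1 (p ^ (2 * (s - 1))) (H - Ks_rhs p s)" and k: "k \<ge> 1"
  shows "in_ideal 1 (p ^ (2 * (s - 1))) (Ks_log_defect p s k H - (if k = 1 then bvV * Cp s else 0))"
proof -
  define M where "M = p ^ (2 * (s - 1))"
  define G where "G = Ks_rhs p s"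
  define N where "N = p ^ (k * s)"
  have G: "in_ideal 0 M G" unfolding G_def by (rule in_ideal_Ks_rhs)
  have "in_ideal 0 M ((H - G) + G)"
    using in_ideal_mono[OF H[folded M_def G_def]] G by (intro in_ideal_add) auto
  then have "in_ideal (1 + k * s) M (H ^ N - G ^ N)"
    unfolding N_def using H[folded M_def G_def] G by (intro in_ideal_power_prime_power_diff) auto
  moreover have "1 + k \<le> 1 + k * s" using s_gt_1 by simp
  ultimately have "in_ideal (1 + k) M (H ^ N - G ^ N)" by (rule in_ideal_mono)
  then have "in_ideal 1 M (bvconst (Ks_log_coeff p s k) * (H ^ N - G ^ N))"
    by (rule in_ideal_log_coeff_mult)
  moreover have "in_ideal 1 M (Ks_log_defect p s k G - (if k = 1 then bvV * Cp s else 0))"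
    using in_ideal_Ks_log_defect_Ks_rhs_1 in_ideal_Ks_log_defect_Ks_rhs_ge_2[of k] k
    by (cases "k = 1") (simp_all add: M_def G_def)
  ultimately have "in_ideal 1 M (bvconst (Ks_log_coeff p s k) * (H ^ N - G ^ N)
      + (Ks_log_defect p s k G - (if k = 1 then bvV * Cp s else 0)))"
    by (rule in_ideal_add)
  moreover have "bvconst (Ks_log_coeff p s k) * (H ^ N - G ^ N) + Ks_log_defect p s k G
      = Ks_log_defect p s k H"
    by (simp add: Ks_log_defect_def N_def algebra_simps)
  ultimately show ?thesis by (simp add: M_def add_diff_eq)
qed

lemma Ks_log_defect_nth_eq:
  assumes "total_order_ge 1 F" "total_order_ge 1 H" "total_order_ge (a + b) (F - H)" "k \<ge> 1"
  shows "Ks_log_defect p s k F $ b $ a = Ks_log_defect p s k H $ b $ a"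
proof -
  have "p ^ (k * s) \<ge> p ^ 1"
    using assms(4) s_gt_1 prime_gt_0_nat[OF p_prime] by (intro power_increasing) (auto simp: Suc_le_eq)
  then have "p ^ (k * s) \<ge> 2" using prime_ge_2_nat[OF p_prime] by simp
  then have "total_order_ge (a + b + 1) (F ^ p ^ (k * s) - H ^ p ^ (k * s))"
    using assms by (intro total_order_ge_power_diff)
  then show ?thesis by (auto simp: total_order_ge_def Ks_log_defect_def bvconst_mult_nth)
qed

text \<open>The induction on the total degree \<open>a + b\<close> compares \<open>log F\<close> with \<open>log H\<close>, where
  \<open>H\<close> is \<open>F\<close> below degree \<open>a + b\<close> and \<open>G\<close> from there on: \<open>F\<close> and \<open>H\<close> have the same
  coefficient of \<open>x^a y^b\<close> in every \<open>z^(p^(ks))\<close>, and \<open>H \<equiv> G\<close> by the induction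
  hypothesis.\<close>
lemma is_Ks_fgl_cong_Ks_rhs:
  assumes F: "is_Ks_fgl p s F" and ab: "a < p ^ (2 * (s - 1)) \<or> b < p ^ (2 * (s - 1))"
  shows "p_pow_dvd 1 ((F - Ks_rhs p s) $ b $ a)"
  using ab
proof (induction "a + b" arbitrary: a b rule: less_induct)
  case less
  define M where "M = p ^ (2 * (s - 1))"
  define G where "G = Ks_rhs p s"
  define d where "d = a + b"
  define H where "H = Abs_fps (\<lambda>j. Abs_fps (\<lambda>i. if i + j < d then F $ j $ i else G $ j $ i))"
  have H_nth: "H $ j $ i = (if i + j < d then F $ j $ i else G $ j $ i)" for i j
    by (simp add: H_def)
  have F00: "F $ 0 $ 0 = 0" using F by (simp add: is_Ks_fgl_def)
  have G00: "G $ 0 $ 0 = 0" unfolding G_def by (rule Ks_rhs_nth_0_0)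
  show ?case
  proof (cases "d = 0")
    case True
    then show ?thesis using F00 G00 by (simp add: d_def G_def p_pow_dvd_0)
  next
    case False
    have "in_ideal 1 M (H - G)"
      using less.hyps by (auto simp: in_ideal_def H_nth M_def G_def d_def p_pow_dvd_0)
    then have defect_H: "in_ideal 1 M (Ks_log_defect p s k H - (if k = 1 then bvV * Cp s else 0))"
      if "k \<ge> 1" for k
      using in_ideal_Ks_log_defect that by (simp add: M_def G_def)
    have "total_order_ge 1 F" "total_order_ge 1 H" "total_order_ge d (F - H)"
      using F00 G00 by (auto simp: total_order_ge_def H_nth)
    then have defect_F_H: "Ks_log_defect p s k F $ b $ a = Ks_log_defect p s k H $ b $ a"
      if "k \<ge> 1" for k
      using Ks_log_defect_nth_eq that by (simp add: d_def)
    have "(\<Sum>k\<in>{1..d}. (if k = 1 then bvV * Cp s else 0)) = bvV * Cp s"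
      using False by simp
    then have "(F - G) $ b $ a
        = - (\<Sum>k\<in>{1..d}. (Ks_log_defect p s k H - (if k = 1 then bvV * Cp s else 0)) $ b $ a)"
      using is_Ks_fgl_nth[OF F, of b a] defect_F_H
      by (simp add: G_def d_def Ks_rhs_eq sum_subtractf flip: fps_sum_nth)
    moreover have "p_pow_dvd 1 (\<Sum>k\<in>{1..d}. (Ks_log_defect p s k H - (if k = 1 then bvV * Cp s else 0)) $ b $ a)"
    proof (rule p_pow_dvd_sum)
      fix k assume "k \<in> {1..d}"
      then have "k \<ge> 1" by simp
      then show "p_pow_dvd 1 ((Ks_log_defect p s k H - (if k = 1 then bvV * Cp s else 0)) $ b $ a)"
        using defect_H less.prems unfolding in_ideal_def M_def by blast
    qed
    ultimately show ?thesis by (simp add: G_def p_pow_dvd_uminus)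
  qed
qed

end

end

theorem proposition3p2:
  fixes p s :: nat and F :: "rat poly fps fps"
  assumes "prime p" and "s > 1" and "is_Ks_fgl p s F"
  shows "(\<forall>a b. a < p ^ (2 * (s - 1)) \<longrightarrow> p_divisible p ((F - Ks_rhs p s) $ b $ a))
       \<and> (\<forall>a b. b < p ^ (2 * (s - 1)) \<longrightarrow> p_divisible p ((F - Ks_rhs p s) $ b $ a))"
proof -
  have "p_divisible p c \<longleftrightarrow> p_pow_dvd p 1 c" for c
    by (simp add: p_divisible_def p_pow_dvd_def[OF assms(1)])
  then show ?thesis using is_Ks_fgl_cong_Ks_rhs[OF assms] by blast
qed

end
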